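(* For every $\varepsilon>0$ and every integer $s\ge1$ there exists a $d$-regular $K_{s+2}$-saturated graph on $n$ vertices with $d/n<\varepsilon$. Moreover, for every integer $s\ge 1$ there exists an infinite sequence of graphs $F_m$, where $F_m$ is $d_m$-regular, $K_{s+2}$-saturated and has $n_m$ vertices, such that $\frac{d_m}{n_m}=O_s\!\left(\frac{(\log\log n_m)^2}{\log n_m}\right)$.
   Context: All graphs are finite and simple. For a graph $F$, a graph $G$ is $F$-saturated if $G$ contains no copy of $F$, but adding any edge between two non-adjacent vertices of $G$ creates a copy of $F$. $K_r$ denotes the complete graph on $r$ vertices. $O_s$ means the implied constant may depend on $s$. *)

theory Defs
  imports Complex_Main
begin

definition simple_graph :: "'a set \<Rightarrow> ('a \<Rightarrow> 'a \<Rightarrow> bool) \<Rightarrow> bool" where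
  "simple_graph V E \<longleftrightarrow> finite V \<and> (\<forall>x y. E x y \<longrightarrow> x \<in> V \<and> y \<in> V)
     \<and> (\<forall>x y. E x y \<longrightarrow> E y x) \<and> (\<forall>x. \<not> E x x)"

definition degree :: "'a set \<Rightarrow> ('a \<Rightarrow> 'a \<Rightarrow> bool) \<Rightarrow> 'a \<Rightarrow> nat" where
  "degree V E v = card {u \<in> V. E v u}"

definition regular :: "'a set \<Rightarrow> ('a \<Rightarrow> 'a \<Rightarrow> bool) \<Rightarrow> nat \<Rightarrow> bool" where
  "regular V E d \<longleftrightarrow> (\<forall>v\<in>V. degree V E v = d)"

definition has_clique :: "'a set \<Rightarrow> ('a \<Rightarrow> 'a \<Rightarrow> bool) \<Rightarrow> nat \<Rightarrow> bool" where
  "has_clique V E r \<longleftrightarrow> (\<exists>S. S \<subseteq> V \<and> card S = r \<and> (\<forall>x\<in>S. \<forall>y\<in>S. x \<noteq> y \<longrightarrow> E x y))"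

definition add_edge :: "('a \<Rightarrow> 'a \<Rightarrow> bool) \<Rightarrow> 'a \<Rightarrow> 'a \<Rightarrow> ('a \<Rightarrow> 'a \<Rightarrow> bool)" where
  "add_edge E x y = (\<lambda>u v. E u v \<or> (u = x \<and> v = y) \<or> (u = y \<and> v = x))"

definition K_saturated :: "'a set \<Rightarrow> ('a \<Rightarrow> 'a \<Rightarrow> bool) \<Rightarrow> nat \<Rightarrow> bool" where
  "K_saturated V E r \<longleftrightarrow> \<not> has_clique V E r \<and>
     (\<forall>x\<in>V. \<forall>y\<in>V. x \<noteq> y \<and> \<not> E x y \<longrightarrow> has_clique V (add_edge E x y) r)"

end

theory Submission
  imports Defs "HOL-Library.Nat_Bijection"
begin

text \<open>For \<open>n = (s + 2) k - 1\<close> the Kneser graph \<open>KG(n, k)\<close>, whose vertices are the \<open>k\<close>-subsets of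
  an \<open>n\<close>-set and whose edges join disjoint sets, is \<open>K\<^sub>s\<^sub>+\<^sub>2\<close>-saturated. Its cliques are
  families of pairwise disjoint \<open>k\<close>-sets, so it has clique number \<open>s + 1\<close>. Two intersecting
  \<open>k\<close>-sets \<open>A\<close>, \<open>B\<close> cover at most \<open>2k - 1\<close> points, which leaves room for \<open>s\<close> further pairwise
  disjoint \<open>k\<close>-sets outside \<open>A \<union> B\<close>; hence adding the edge \<open>AB\<close> creates a \<open>K\<^sub>s\<^sub>+\<^sub>2\<close>.
  The graph is \<open>C(n - k, k)\<close>-regular on \<open>N = C(n, k)\<close> vertices, and
  \<open>C(n - k, k) / C(n, k) \<le> ((n - k) / n)\<^sup>k\<close>, which by Bernoulli's inequality is at most \<open>(s + 1) / k\<close>.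
  As \<open>ln N \<le> n < (s + 2) k\<close>, the density is even \<open>O\<^sub>s(1 / ln N)\<close>.\<close>

text \<open>The statement asks for graphs on \<^typ>\<open>nat\<close>, so the vertices of \<open>KG(n, k)\<close> are encoded
  by \<^const>\<open>set_encode\<close>.\<close>

definition kneser_vertices :: "nat \<Rightarrow> nat \<Rightarrow> nat set" where
  "kneser_vertices n k = set_encode ` {A. A \<subseteq> {..<n} \<and> card A = k}"

definition kneser_adj :: "nat \<Rightarrow> nat \<Rightarrow> nat \<Rightarrow> nat \<Rightarrow> bool" where
  "kneser_adj n k x y \<longleftrightarrow>
     x \<in> kneser_vertices n k \<and> y \<in> kneser_vertices n k \<and> disjnt (set_decode x) (set_decode y)"

lemma mem_kneser_vertices:
  "x \<in> kneser_vertices n k \<longleftrightarrow> set_decode x \<subseteq> {..<n} \<and> card (set_decode x) = k"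
proof
  assume "x \<in> kneser_vertices n k"
  then obtain A where "A \<subseteq> {..<n}" "card A = k" "x = set_encode A"
    unfolding kneser_vertices_def by blast
  then show "set_decode x \<subseteq> {..<n} \<and> card (set_decode x) = k"
    by (simp add: finite_subset)
next
  assume "set_decode x \<subseteq> {..<n} \<and> card (set_decode x) = k"
  then show "x \<in> kneser_vertices n k"
    unfolding kneser_vertices_def by (intro image_eqI[of x set_encode "set_decode x"]) auto
qed

lemma card_set_encode_image: "(\<And>A. A \<in> G \<Longrightarrow> finite A) \<Longrightarrow> card (set_encode ` G) = card G"
  by (rule card_image, rule inj_on_subset[OF inj_on_set_encode]) auto

lemma card_kneser_vertices: "card (kneser_vertices n k) = n choose k"
  unfolding kneser_vertices_def
  by (subst card_set_encode_image) (auto intro: finite_subset[OF _ finite_lessThan] simp: n_subsets)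

lemma finite_kneser_vertices: "finite (kneser_vertices n k)"
  unfolding kneser_vertices_def by simp

lemma kneser_simple_graph: "0 < k \<Longrightarrow> simple_graph (kneser_vertices n k) (kneser_adj n k)"
  unfolding simple_graph_def kneser_adj_def
  by (auto simp: finite_kneser_vertices mem_kneser_vertices disjnt_def)

lemma kneser_regular: "regular (kneser_vertices n k) (kneser_adj n k) ((n - k) choose k)"
  unfolding regular_def degree_def
proof
  fix x assume x: "x \<in> kneser_vertices n k"
  let ?A = "set_decode x"
  have "{y \<in> kneser_vertices n k. kneser_adj n k x y} = set_encode ` {B. B \<subseteq> {..<n} - ?A \<and> card B = k}"
  proof (intro equalityI subsetI)
    fix y assume "y \<in> {y \<in> kneser_vertices n k. kneser_adj n k x y}"
    then have "set_decode y \<in> {B. B \<subseteq> {..<n} - ?A \<and> card B = k}"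
      by (auto simp: kneser_adj_def mem_kneser_vertices disjnt_def)
    then show "y \<in> set_encode ` {B. B \<subseteq> {..<n} - ?A \<and> card B = k}"
      by (metis image_eqI set_decode_inverse)
  next
    fix y assume "y \<in> set_encode ` {B. B \<subseteq> {..<n} - ?A \<and> card B = k}"
    then obtain B where B: "B \<subseteq> {..<n} - ?A" "card B = k" and y: "y = set_encode B"
      by blast
    then have "set_decode y = B"
      by (simp add: finite_subset)
    with B x show "y \<in> {y \<in> kneser_vertices n k. kneser_adj n k x y}"
      by (auto simp: kneser_adj_def mem_kneser_vertices disjnt_def)
  qed
  also have "card \<dots> = card ({..<n} - ?A) choose k"
    by (subst card_set_encode_image) (auto intro: finite_subset[OF _ finite_lessThan] simp: n_subsets)
  also have "card ({..<n} - ?A) = n - k"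
    using x by (simp add: mem_kneser_vertices card_Diff_subset)
  finally show "card {y \<in> kneser_vertices n k. kneser_adj n k x y} = (n - k) choose k" .
qed

lemma kneser_adj_set_encode:
  assumes "A \<subseteq> {..<n}" "card A = k" "B \<subseteq> {..<n}" "card B = k"
  shows "kneser_adj n k (set_encode A) (set_encode B) \<longleftrightarrow> disjnt A B"
proof -
  have "finite A" "finite B"
    using assms finite_subset by blast+
  with assms show ?thesis
    by (simp add: kneser_adj_def mem_kneser_vertices)
qed

lemma card_disjoint_family_le:
  assumes "pairwise disjnt G" "\<forall>A\<in>G. A \<subseteq> X \<and> card A = k" "finite X"
  shows "card G * k \<le> card X"
proof -
  have "card G * k = sum card G"
    using assms(2) by simp
  also have "\<dots> = card (\<Union>G)"
    using assms(2) by (intro card_Union_disjoint[symmetric, OF assms(1)] finite_subset[OF _ assms(3)]) simp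
  also have "\<dots> \<le> card X"
    using assms(2,3) by (intro card_mono) auto
  finally show ?thesis .
qed

lemma exists_disjoint_family:
  assumes "finite R" "s * k \<le> card R" "0 < k"
  shows "\<exists>G. card G = s \<and> (\<forall>A\<in>G. A \<subseteq> R \<and> card A = k) \<and> pairwise disjnt G"
  using assms(1,2)
proof (induction s arbitrary: R)
  case 0
  show ?case by (intro exI[of _ "{}"]) auto
next
  case (Suc s)
  obtain C where C: "C \<subseteq> R" "card C = k"
    using obtain_subset_with_card_n[of k R] Suc.prems by auto
  have "finite C"
    using C(1) Suc.prems(1) by (rule finite_subset)
  then have "s * k \<le> card (R - C)"
    using C Suc.prems by (simp add: card_Diff_subset)
  then obtain G where G: "card G = s" "\<forall>A\<in>G. A \<subseteq> R - C \<and> card A = k" "pairwise disjnt G"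
    using Suc.IH[of "R - C"] Suc.prems(1) by auto
  have "C \<notin> G"
  proof
    assume "C \<in> G"
    then have "C = {}"
      using G(2) by blast
    with C(2) assms(3) show False
      by simp
  qed
  moreover have "finite G"
    using G(2) Suc.prems(1) by (intro finite_subset[of G "Pow R"]) auto
  moreover have "pairwise disjnt (insert C G)"
    using G(2,3) by (auto simp: pairwise_insert disjnt_iff)
  ultimately show ?case
    using C G by (intro exI[of _ "insert C G"]) auto
qed

lemma has_clique_kneser_of_family:
  assumes "\<forall>A\<in>G. A \<subseteq> {..<n} \<and> card A = k" "card G = m"
    and "\<And>A B. A \<in> G \<Longrightarrow> B \<in> G \<Longrightarrow> A \<noteq> B \<Longrightarrow> E (set_encode A) (set_encode B)"
  shows "has_clique (kneser_vertices n k) E m"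
  unfolding has_clique_def
proof (intro exI[of _ "set_encode ` G"] conjI)
  have fin: "\<And>A. A \<in> G \<Longrightarrow> finite A"
    using assms(1) finite_subset by blast
  show "set_encode ` G \<subseteq> kneser_vertices n k"
    using assms(1) by (auto simp: kneser_vertices_def)
  show "card (set_encode ` G) = m"
    using card_set_encode_image[OF fin] assms(2) by simp
  show "\<forall>x\<in>set_encode ` G. \<forall>y\<in>set_encode ` G. x \<noteq> y \<longrightarrow> E x y"
    using assms(3) by blast
qed

lemma kneser_clique_imp_family:
  assumes "has_clique (kneser_vertices n k) (kneser_adj n k) m"
  shows "\<exists>G. (\<forall>A\<in>G. A \<subseteq> {..<n} \<and> card A = k) \<and> card G = m \<and> pairwise disjnt G"
proof -
  obtain S where S: "S \<subseteq> kneser_vertices n k" "card S = m"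
    and adj: "\<forall>x\<in>S. \<forall>y\<in>S. x \<noteq> y \<longrightarrow> kneser_adj n k x y"
    using assms unfolding has_clique_def by blast
  have "inj_on set_decode S"
    by (metis inj_onI set_decode_inverse)
  then have "card (set_decode ` S) = m"
    using S(2) by (simp add: card_image)
  moreover have "pairwise disjnt (set_decode ` S)"
    using adj by (auto simp: pairwise_def kneser_adj_def)
  moreover have "\<forall>A\<in>set_decode ` S. A \<subseteq> {..<n} \<and> card A = k"
    using S(1) mem_kneser_vertices by blast
  ultimately show ?thesis
    by blast
qed

lemma kneser_no_clique:
  assumes "n < m * k"
  shows "\<not> has_clique (kneser_vertices n k) (kneser_adj n k) m"
proof
  assume "has_clique (kneser_vertices n k) (kneser_adj n k) m"
  then obtain G where "\<forall>A\<in>G. A \<subseteq> {..<n} \<and> card A = k" "card G = m" "pairwise disjnt G"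
    using kneser_clique_imp_family by blast
  then have "m * k \<le> n"
    using card_disjoint_family_le[of G "{..<n}" k] by simp
  with assms show False
    by simp
qed

lemma card_Un_less_if_not_disjnt:
  assumes "finite A" "finite B" "\<not> disjnt A B"
  shows "card (A \<union> B) < card A + card B"
proof -
  have "card (A \<inter> B) > 0"
    using assms by (simp add: card_gt_0_iff disjnt_def)
  then show ?thesis
    using card_Un_Int[OF assms(1,2)] by simp
qed

lemma intersecting_pair_extends_to_family:
  assumes "(s + 2) * k \<le> n + 1" "0 < k"
    and AB: "A \<subseteq> {..<n}" "card A = k" "B \<subseteq> {..<n}" "card B = k"
    and "A \<noteq> B" "\<not> disjnt A B"
  obtains G where "A \<in> G" "B \<in> G" "card G = s + 2" "\<forall>C\<in>G. C \<subseteq> {..<n} \<and> card C = k"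
    "\<forall>U\<in>G. \<forall>W\<in>G. U \<noteq> W \<and> {U, W} \<noteq> {A, B} \<longrightarrow> disjnt U W"
proof -
  have "finite A" "finite B"
    using AB finite_subset by blast+
  then have "card (A \<union> B) < 2 * k"
    using card_Un_less_if_not_disjnt[of A B] \<open>\<not> disjnt A B\<close> AB by simp
  define R where "R = {..<n} - (A \<union> B)"
  have "card R = n - card (A \<union> B)"
    using AB by (simp add: R_def card_Diff_subset \<open>finite A\<close> \<open>finite B\<close>)
  then have "s * k \<le> card R"
    using \<open>card (A \<union> B) < 2 * k\<close> assms(1) by simp
  then obtain F where F: "card F = s" "\<forall>C\<in>F. C \<subseteq> R \<and> card C = k" "pairwise disjnt F"
    using exists_disjoint_family[of R s k] assms(2) by (auto simp: R_def)
  have F_disjnt_AB: "disjnt C (A \<union> B)" if "C \<in> F" for C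
    using F(2) that by (auto simp: R_def disjnt_iff)
  have "A \<noteq> {}" "B \<noteq> {}"
    using AB assms(2) by auto
  then have AB_notin_F: "A \<notin> F" "B \<notin> F"
    using F_disjnt_AB by (auto simp: disjnt_iff)
  have "finite F"
    using F(2) by (intro finite_subset[of F "Pow R"]) (auto simp: R_def)
  define G where "G = insert A (insert B F)"
  have card_G: "card G = s + 2"
    using AB_notin_F \<open>finite F\<close> \<open>A \<noteq> B\<close> F(1) by (simp add: G_def)
  have G_family: "\<forall>C\<in>G. C \<subseteq> {..<n} \<and> card C = k"
    using AB F(2) by (auto simp: G_def R_def)
  have disjnt_G: "\<forall>U\<in>G. \<forall>W\<in>G. U \<noteq> W \<and> {U, W} \<noteq> {A, B} \<longrightarrow> disjnt U W"
  proof (intro ballI impI)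
    fix U W assume U: "U \<in> G" and W: "W \<in> G" and UW: "U \<noteq> W \<and> {U, W} \<noteq> {A, B}"
    have "U \<in> F \<or> W \<in> F"
    proof (rule ccontr)
      assume "\<not> (U \<in> F \<or> W \<in> F)"
      then have "U \<in> {A, B}" "W \<in> {A, B}"
        using U W by (auto simp: G_def)
      then have "{U, W} = {A, B}"
        using UW by auto
      with UW show False
        by simp
    qed
    then show "disjnt U W"
      using U W UW F(3) F_disjnt_AB by (auto simp: G_def pairwise_def disjnt_iff)
  qed
  have "A \<in> G" "B \<in> G"
    by (simp_all add: G_def)
  then show thesis
    by (rule that[OF _ _ card_G G_family disjnt_G])
qed

lemma kneser_add_edge_has_clique:
  assumes "(s + 2) * k \<le> n + 1" "0 < k"
    and x: "x \<in> kneser_vertices n k" and y: "y \<in> kneser_vertices n k"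
    and "x \<noteq> y" "\<not> kneser_adj n k x y"
  shows "has_clique (kneser_vertices n k) (add_edge (kneser_adj n k) x y) (s + 2)"
proof -
  define A where "A = set_decode x"
  define B where "B = set_decode y"
  have AB: "A \<subseteq> {..<n}" "card A = k" "B \<subseteq> {..<n}" "card B = k"
    using x y by (simp_all add: A_def B_def mem_kneser_vertices)
  have "A \<noteq> B"
    using \<open>x \<noteq> y\<close> unfolding A_def B_def by (metis set_decode_inverse)
  have "\<not> disjnt A B"
    using assms(6) x y by (simp add: A_def B_def kneser_adj_def)
  obtain G where G: "A \<in> G" "B \<in> G" "card G = s + 2" "\<forall>C\<in>G. C \<subseteq> {..<n} \<and> card C = k"
    and disjnt_G: "\<forall>U\<in>G. \<forall>W\<in>G. U \<noteq> W \<and> {U, W} \<noteq> {A, B} \<longrightarrow> disjnt U W"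
    by (rule intersecting_pair_extends_to_family[OF assms(1,2) AB \<open>A \<noteq> B\<close> \<open>\<not> disjnt A B\<close>])
  show ?thesis
  proof (rule has_clique_kneser_of_family[OF G(4,3)])
    fix U W assume U: "U \<in> G" and W: "W \<in> G" and "U \<noteq> W"
    show "add_edge (kneser_adj n k) x y (set_encode U) (set_encode W)"
    proof (cases "{U, W} = {A, B}")
      case True
      then show ?thesis
        by (auto simp: add_edge_def A_def B_def doubleton_eq_iff)
    next
      case False
      then have "disjnt U W"
        using disjnt_G U W \<open>U \<noteq> W\<close> by simp
      then have "kneser_adj n k (set_encode U) (set_encode W)"
        using U W G(4) by (simp add: kneser_adj_set_encode)
      then show ?thesis
        by (simp add: add_edge_def)
    qed
  qed
qed

lemma kneser_K_saturated:
  assumes "0 < k" "n + 1 = (s + 2) * k"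
  shows "K_saturated (kneser_vertices n k) (kneser_adj n k) (s + 2)"
  unfolding K_saturated_def
proof (intro conjI ballI impI)
  show "\<not> has_clique (kneser_vertices n k) (kneser_adj n k) (s + 2)"
    using assms(2) by (intro kneser_no_clique) simp
next
  fix x y assume "x \<in> kneser_vertices n k" "y \<in> kneser_vertices n k" "x \<noteq> y \<and> \<not> kneser_adj n k x y"
  then show "has_clique (kneser_vertices n k) (add_edge (kneser_adj n k) x y) (s + 2)"
    using assms by (intro kneser_add_edge_has_clique) simp_all
qed

lemma kneser_has_non_edge:
  assumes "2 \<le> k" "k < n"
  shows "\<exists>x\<in>kneser_vertices n k. \<exists>y\<in>kneser_vertices n k. x \<noteq> y \<and> \<not> kneser_adj n k x y"
proof (intro bexI conjI)
  have "0 \<in> {..<k}" "0 \<notin> {1..k}" "1 \<in> {..<k} \<inter> {1..k}"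
    using assms(1) by auto
  then have "{..<k} \<noteq> {1..k}" "\<not> disjnt {..<k} {1..k}"
    unfolding disjnt_def by blast+
  moreover have "{..<k} \<subseteq> {..<n}" "{1..k} \<subseteq> {..<n}"
    using assms(2) by auto
  ultimately show "set_encode {..<k} \<noteq> set_encode {1..k}"
    and "\<not> kneser_adj n k (set_encode {..<k}) (set_encode {1..k})"
    by (simp_all add: set_encode_eq kneser_adj_set_encode)
  show "set_encode {..<k} \<in> kneser_vertices n k" "set_encode {1..k} \<in> kneser_vertices n k"
    using assms by (auto simp: kneser_vertices_def)
qed

lemma binomial_le_ratio_power:
  assumes "a \<le> b"
  shows "real (a choose r) \<le> (real a / real b) ^ r * real (b choose r)"
proof (cases "r \<le> a")
  case True
  have "real (a choose r) = (\<Prod>i = 0..<r. real (a - i) / real (r - i))"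
    using True by (rule binomial_altdef_of_nat)
  also have "\<dots> \<le> (\<Prod>i = 0..<r. real a / real b * (real (b - i) / real (r - i)))"
  proof (rule prod_mono)
    fix i assume "i \<in> {0..<r}"
    then have "i < r" "r \<le> b"
      using True assms by auto
    then have "real (a - i) * real b \<le> real a * real (b - i)"
      using True assms by (simp add: of_nat_diff algebra_simps mult_right_mono)
    then have "real (a - i) \<le> real a / real b * real (b - i)"
      using \<open>i < r\<close> \<open>r \<le> b\<close> by (simp add: field_simps)
    then have "real (a - i) / real (r - i) \<le> real a / real b * real (b - i) / real (r - i)"
      by (rule divide_right_mono) simp
    then show "0 \<le> real (a - i) / real (r - i) \<and>
        real (a - i) / real (r - i) \<le> real a / real b * (real (b - i) / real (r - i))"
      by simp
  qed
  also have "\<dots> = (\<Prod>i = 0..<r. real a / real b) * (\<Prod>i = 0..<r. real (b - i) / real (r - i))"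
    by (rule prod.distrib)
  also have "\<dots> = (real a / real b) ^ r * real (b choose r)"
    using True assms by (simp only: prod_constant card_atLeastLessThan diff_zero binomial_altdef_of_nat)
  finally show ?thesis .
qed (simp add: binomial_eq_0)

lemma Bernoulli_ratio_power_le:
  fixes x :: real and r :: nat
  assumes "0 \<le> x" "0 < r"
  shows "(x / (x + r)) ^ r \<le> x / (real r)\<^sup>2"
proof (cases "x = 0")
  case False
  then have "x > 0"
    using assms(1) by simp
  have "r\<^sup>2 / x \<le> 1 + r * (r / x)"
    by (simp add: power2_eq_square)
  also have "\<dots> \<le> (1 + r / x) ^ r"
  proof (rule Bernoulli_inequality)
    show "-1 \<le> real r / x"
      using \<open>x > 0\<close> by (smt (verit) divide_nonneg_pos of_nat_0_le_iff)
  qed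
  also have "\<dots> = ((x + r) / x) ^ r"
    using \<open>x > 0\<close> by (simp add: field_simps)
  finally have "r\<^sup>2 / x \<le> ((x + r) / x) ^ r" .
  then have "1 / ((x + r) / x) ^ r \<le> 1 / (r\<^sup>2 / x)"
    using \<open>x > 0\<close> assms(2) by (intro divide_left_mono) auto
  then show ?thesis
    by (simp add: power_divide)
qed (use assms in \<open>simp add: zero_power\<close>)

lemma kneser_degree_ratio_le:
  assumes "0 < k" "n + 1 = (s + 2) * k"
  shows "real ((n - k) choose k) / real (n choose k) \<le> real (s + 1) / real k"
proof -
  define a where "a = n - k"
  have "n = a + k" "a \<le> (s + 1) * k"
    using assms by (simp_all add: a_def algebra_simps)
  then have "real a \<le> real (s + 1) * real k"
    by (metis of_nat_le_iff of_nat_mult)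
  have "real (n choose k) > 0"
    using \<open>n = a + k\<close> by simp
  moreover have "real (a choose k) \<le> (real a / real n) ^ k * real (n choose k)"
    using \<open>n = a + k\<close> by (intro binomial_le_ratio_power) simp
  ultimately have "real (a choose k) / real (n choose k) \<le> (real a / real n) ^ k"
    by (simp only: pos_divide_le_eq)
  also have "\<dots> = (real a / (real a + k)) ^ k"
    using \<open>n = a + k\<close> by simp
  also have "\<dots> \<le> real a / (real k)\<^sup>2"
    using assms(1) by (intro Bernoulli_ratio_power_le) auto
  also have "\<dots> \<le> real (s + 1) * real k / (real k)\<^sup>2"
    using \<open>real a \<le> real (s + 1) * real k\<close> by (intro divide_right_mono) auto
  also have "\<dots> = real (s + 1) / real k"
    by (simp add: power2_eq_square)
  finally show ?thesis
    by (simp add: a_def)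
qed

lemma ln_binomial_le: "ln (real (n choose k)) \<le> real n"
proof (cases "n choose k = 0")
  case False
  have "real (n choose k) \<le> 2 ^ n"
    by (metis binomial_le_pow2 of_nat_le_iff of_nat_numeral of_nat_power)
  then have "ln (real (n choose k)) \<le> ln (2 ^ n)"
    using False by simp
  also have "\<dots> = real n * ln 2"
    by (simp add: ln_realpow)
  also have "\<dots> \<le> real n"
    using ln_2_less_1 by (simp add: mult_left_le)
  finally show ?thesis .
next
  case True
  then show ?thesis
    by (simp only: of_nat_0 ln_0 of_nat_0_le_iff)
qed

lemma binomial_less_binomial_Suc_Suc:
  assumes "k < n" "Suc n \<le> m"
  shows "n choose k < m choose Suc k"
proof -
  have "n choose k < (n choose k) + (n choose Suc k)"
    using assms(1) by simp
  also have "\<dots> = Suc n choose Suc k"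
    by simp
  also have "\<dots> \<le> m choose Suc k"
    using assms(2) by (rule binomial_right_mono)
  finally show ?thesis .
qed

lemma le_loglog_over_ln_if_mult_ln_le:
  fixes q c x :: real
  assumes "0 \<le> q" "q * ln x \<le> c" "27 \<le> x"
  shows "q \<le> c * (ln (ln x))\<^sup>2 / ln x"
proof -
  have "exp (exp 1) \<le> exp (3 :: real)"
    using exp_le by simp
  also have "\<dots> = exp 1 ^ 3"
    by (simp flip: exp_of_nat_mult)
  also have "\<dots> \<le> 3 ^ 3"
    using exp_le by (intro power_mono) auto
  also have "\<dots> \<le> x"
    using assms(3) by simp
  finally have "exp (exp 1) \<le> x" .
  then have "exp 1 \<le> ln x"
    by (metis exp_gt_zero ln_exp ln_le_cancel_iff order_less_le_trans)
  have "0 < ln x"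
    using \<open>exp 1 \<le> ln x\<close> exp_gt_zero[of 1] by linarith
  then have "1 \<le> ln (ln x)"
    using \<open>exp 1 \<le> ln x\<close> by (simp add: ln_ge_iff)
  then have "1 \<le> (ln (ln x))\<^sup>2"
    by (simp add: one_le_power)
  moreover have "0 \<le> c"
    using assms(1,2) \<open>0 < ln x\<close> by (smt (verit) mult_nonneg_nonneg)
  ultimately have "c \<le> c * (ln (ln x))\<^sup>2"
    by (simp add: mult_le_cancel_left1)
  then show ?thesis
    using assms(2) \<open>0 < ln x\<close> by (simp add: field_simps)
qed

lemma sparse_regular_K_saturated_graph:
  assumes "0 < \<epsilon>"
  shows "\<exists>(V::nat set) E d. simple_graph V E \<and> regular V E d \<and> K_saturated V E (s + 2)
           \<and> (\<exists>x\<in>V. \<exists>y\<in>V. x \<noteq> y \<and> \<not> E x y) \<and> real d / real (card V) < \<epsilon>"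
proof -
  obtain N :: nat where "real (s + 1) / \<epsilon> < N"
    using reals_Archimedean2 by blast
  define k where "k = N + 2"
  define n where "n = (s + 2) * k - 1"
  have k: "0 < k" "2 \<le> k" and n: "n + 1 = (s + 2) * k" "k < n"
    by (simp_all add: n_def k_def algebra_simps)
  have "real ((n - k) choose k) / real (card (kneser_vertices n k)) \<le> real (s + 1) / real k"
    unfolding card_kneser_vertices by (rule kneser_degree_ratio_le[OF k(1) n(1)])
  also have "\<dots> < \<epsilon>"
    using \<open>real (s + 1) / \<epsilon> < N\<close> assms by (simp add: k_def field_simps)
  finally show ?thesis
    using kneser_K_saturated[OF k(1) n(1)] kneser_has_non_edge[OF k(2) n(2)]
    by (intro exI[of _ "kneser_vertices n k"] exI[of _ "kneser_adj n k"] exI[of _ "(n - k) choose k"]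
        conjI kneser_simple_graph[OF k(1)] kneser_regular)
qed

lemma regular_K_saturated_graph_sequence:
  "\<exists>(V::nat \<Rightarrow> nat set) (E::nat \<Rightarrow> nat \<Rightarrow> nat \<Rightarrow> bool) (d::nat \<Rightarrow> nat).
     (\<forall>m. simple_graph (V m) (E m) \<and> regular (V m) (E m) (d m) \<and> K_saturated (V m) (E m) (s + 2))
     \<and> strict_mono (\<lambda>m. card (V m))
     \<and> (\<exists>C::real. \<exists>M. \<forall>m\<ge>M. real (d m) / real (card (V m))
          \<le> C * (ln (ln (real (card (V m)))))\<^sup>2 / ln (real (card (V m))))"
proof (intro exI conjI)
  define n where "n m = (s + 2) * (m + 2) - 1" for m
  define V where "V m = kneser_vertices (n m) (m + 2)" for m
  define E where "E m = kneser_adj (n m) (m + 2)" for m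
  define d where "d m = (n m - (m + 2)) choose (m + 2)" for m
  have n_eq: "n m + 1 = (s + 2) * (m + 2)" for m
    by (simp add: n_def algebra_simps)
  show "\<forall>m. simple_graph (V m) (E m) \<and> regular (V m) (E m) (d m) \<and> K_saturated (V m) (E m) (s + 2)"
    unfolding V_def E_def d_def
    using kneser_simple_graph kneser_regular kneser_K_saturated[OF _ n_eq] by simp
  show mono: "strict_mono (\<lambda>m. card (V m))"
  proof (rule strict_mono_Suc_iff[THEN iffD2, rule_format])
    fix m
    have "n m choose (m + 2) < n (Suc m) choose Suc (m + 2)"
      by (rule binomial_less_binomial_Suc_Suc) (simp_all add: n_def algebra_simps)
    then show "card (V m) < card (V (Suc m))"
      by (simp add: V_def card_kneser_vertices)
  qed
  show "\<forall>m\<ge>27. real (d m) / real (card (V m))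
      \<le> real ((s + 1) * (s + 2)) * (ln (ln (real (card (V m)))))\<^sup>2 / ln (real (card (V m)))"
  proof (intro allI impI le_loglog_over_ln_if_mult_ln_le)
    fix m :: nat assume "27 \<le> m"
    then show N: "27 \<le> real (card (V m))"
      using strict_mono_imp_increasing[OF mono, of m] by simp
    have ratio: "real (d m) / real (card (V m)) \<le> real (s + 1) / real (m + 2)"
      unfolding V_def d_def card_kneser_vertices by (rule kneser_degree_ratio_le[OF _ n_eq]) simp
    have "ln (real (card (V m))) \<le> real (n m)"
      unfolding V_def card_kneser_vertices by (rule ln_binomial_le)
    also have "\<dots> \<le> real (s + 2) * real (m + 2)"
      using n_eq[of m] by (metis le_add1 of_nat_le_iff of_nat_mult)
    finally have "real (d m) / real (card (V m)) * ln (real (card (V m)))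
        \<le> real (s + 1) / real (m + 2) * (real (s + 2) * real (m + 2))"
      using ratio N by (intro mult_mono) auto
    also have "\<dots> = real (s + 1) * real (s + 2)"
      by simp
    also have "\<dots> = real ((s + 1) * (s + 2))"
      by (simp only: of_nat_mult)
    finally show "real (d m) / real (card (V m)) * ln (real (card (V m))) \<le> real ((s + 1) * (s + 2))" .
  qed simp
qed

theorem theorem1p3:
  shows "(\<forall>\<epsilon>::real. \<epsilon> > 0 \<longrightarrow> (\<forall>s::nat. s \<ge> 1 \<longrightarrow>
            (\<exists>(V::nat set) E d. simple_graph V E \<and> regular V E d \<and> K_saturated V E (s + 2)
               \<and> (\<exists>x\<in>V. \<exists>y\<in>V. x \<noteq> y \<and> \<not> E x y)
               \<and> real d / real (card V) < \<epsilon>)))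
       \<and> (\<forall>s::nat. s \<ge> 1 \<longrightarrow>
            (\<exists>(V::nat \<Rightarrow> nat set) (E::nat \<Rightarrow> nat \<Rightarrow> nat \<Rightarrow> bool) (d::nat \<Rightarrow> nat).
               (\<forall>m. simple_graph (V m) (E m) \<and> regular (V m) (E m) (d m)
                     \<and> K_saturated (V m) (E m) (s + 2))
               \<and> strict_mono (\<lambda>m. card (V m))
               \<and> (\<exists>C::real. \<exists>M. \<forall>m\<ge>M.
                    real (d m) / real (card (V m))
                      \<le> C * (ln (ln (real (card (V m)))))\<^sup>2 / ln (real (card (V m))))))"
  by (intro conjI allI impI sparse_regular_K_saturated_graph regular_K_saturated_graph_sequence)

end
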